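(* Let $T$ be a training dataset with $m$ features and $n$ records, where each feature takes at most $v$ possible values. Let $y_{\min}$ be the class label with the fewest records in $T$ and $n_{y_{\min}}$ the number of records with label $y_{\min}$. Then naive Bayes with Laplace smoothing is $\delta$-training stable on $T$ with $\delta=\left(\frac{n_{y_{\min}}+v}{n_{y_{\min}}}\right)^{m-1}\frac{n}{n-1}$.
   Context: Records are pairs $(\mathbf{x},y)$ with $\mathbf{x}=(x_1,\dots,x_m)\in X^m$ and $y\in Y$ finite; a training dataset is a finite multiset of records. For a dataset $S$ of size $N_S$, let $n^S_y$ be the number of records with label $y$ and $n^S_{x_i,y}$ the number with $i$-th feature $x_i$ and label $y$. Naive Bayes with Laplace smoothing trained on $S$ gives $p_{\mathcal{A}(S)}(y\mid\mathbf{x})=\hat p_S(y)\prod_{i=1}^m\hat p_S(x_i\mid y)$ with $\hat p_S(y)=n^S_y/N_S$ and smoothed conditionals $\hat p_S(x_i\mid y)=(n^S_{x_i,y}+1)/(n^S_y+v)$. $\mathcal{A}$ is $\delta$-training stable on $T$ (for a constant $\delta>1$) if for every $t=(\mathbf{x}^{(t)},y^{(t)})\in T$ with $p_{\mathcal{A}(T\setminus\{t\})}(y^{(t)}\mid\mathbf{x}^{(t)})>0$ and $p_{\mathcal{A}(T)}(y^{(t)}\mid\mathbf{x}^{(t)})>0$, setting $\gamma_t=\max\Big(\delta,\ \frac{p_{\mathcal{A}(T)}(y^{(t)}\mid\mathbf{x}^{(t)})}{p_{\mathcal{A}(T\setminus\{t\})}(y^{(t)}\mid\mathbf{x}^{(t)})},\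 \frac{p_{\mathcal{A}(T\setminus\{t\})}(y^{(t)}\mid\mathbf{x}^{(t)})}{p_{\mathcal{A}(T)}(y^{(t)}\mid\mathbf{x}^{(t)})}\Big)$, one has $\gamma_t^{-1}p_{\mathcal{A}(T\setminus\{t\})}(y\mid\mathbf{x})\le p_{\mathcal{A}(T)}(y\mid\mathbf{x})\le\gamma_t\,p_{\mathcal{A}(T\setminus\{t\})}(y\mid\mathbf{x})$ for all $\mathbf{x}\in X^m$, $y\in Y$. *)

theory Defs
  imports Complex_Main "HOL-Library.Multiset"
begin

text \<open>A record is a pair (x, y) with x a feature vector, represented as a list of
  length m, and y a class label. A training dataset is a finite multiset of records.\<close>

type_synonym ('x, 'y) rec = "'x list \<times> 'y"
type_synonym ('x, 'y) dataset = "('x, 'y) rec multiset"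

definition n_label :: "('x, 'y) dataset \<Rightarrow> 'y \<Rightarrow> nat" where
  "n_label S y = size (filter_mset (\<lambda>r. snd r = y) S)"

definition n_feat_label :: "('x, 'y) dataset \<Rightarrow> nat \<Rightarrow> 'x \<Rightarrow> 'y \<Rightarrow> nat" where
  "n_feat_label S i a y = size (filter_mset (\<lambda>r. fst r ! i = a \<and> snd r = y) S)"

definition nb_laplace :: "nat \<Rightarrow> nat \<Rightarrow> ('x, 'y) dataset \<Rightarrow> 'x list \<Rightarrow> 'y \<Rightarrow> real" where
  "nb_laplace v m S x y =
     (real (n_label S y) / real (size S)) *
     (\<Prod>i<m. (real (n_feat_label S i (x ! i) y) + 1) / (real (n_label S y) + real v))"

definition record_space :: "nat \<Rightarrow> (nat \<Rightarrow> 'x set) \<Rightarrow> 'x list set" where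
  "record_space m D = {x. length x = m \<and> (\<forall>i<m. x ! i \<in> D i)}"

text \<open>delta-training stability of a learner p (p S x y = probability of y given x for the
  model trained on S) on T, where x ranges over Xs and y over Ys; delta > 1 is required.\<close>
definition delta_training_stable ::
  "(('x, 'y) dataset \<Rightarrow> 'x list \<Rightarrow> 'y \<Rightarrow> real) \<Rightarrow> real \<Rightarrow> ('x, 'y) dataset
     \<Rightarrow> 'x list set \<Rightarrow> 'y set \<Rightarrow> bool" where
  "delta_training_stable p \<delta> T Xs Ys \<longleftrightarrow> 1 < \<delta> \<and>
     (\<forall>t \<in># T.
        p (T - {#t#}) (fst t) (snd t) > 0 \<and> p T (fst t) (snd t) > 0 \<longrightarrow>
        (let \<gamma> = max \<delta> (max (p T (fst t) (snd t) / p (T - {#t#}) (fst t) (snd t))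
                              (p (T - {#t#}) (fst t) (snd t) / p T (fst t) (snd t)))
         in \<forall>x\<in>Xs. \<forall>y\<in>Ys.
              inverse \<gamma> * p (T - {#t#}) x y \<le> p T x y \<and>
              p T x y \<le> \<gamma> * p (T - {#t#}) x y))"

end

theory Submission
  imports Defs
begin

text \<open>Removing a record \<open>t = (x\<^sub>t, y\<^sub>t)\<close> from \<open>T\<close> changes the model only through the counts
  of label \<open>y\<^sub>t\<close>. For every other label only the prior moves, by the factor \<open>N / (N - 1)\<close>.
  For the label \<open>y\<^sub>t\<close>, with \<open>n\<close> records in \<open>T\<close>, each of the \<open>m\<close> smoothed conditionals
  shrinks by at most \<open>(n + v) / (n - 1 + v) \<le> (n + v) / n \<le> (n_min + v) / n_min\<close> (here \<open>v \<ge> 1\<close>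
  is needed), and one of these factors is absorbed by the prior \<open>(n - 1) / (N - 1)\<close>; this gives
  \<open>p\<^sub>T\<^sub>-\<^sub>t \<le> \<delta> p\<^sub>T\<close>. Conversely, \<open>p\<^sub>T(y | x) \<le> p\<^sub>T\<^sub>-\<^sub>t(y | x)\<close> for \<open>y \<noteq> y\<^sub>t\<close>, and the ratio
  \<open>p\<^sub>T(y\<^sub>t | x) / p\<^sub>T\<^sub>-\<^sub>t(y\<^sub>t | x)\<close> is largest at \<open>x = x\<^sub>t\<close>, where it is one of the terms of the
  maximum defining \<open>\<gamma>\<^sub>t\<close>.\<close>

lemma n_label_add_mset [simp]:
  "n_label (add_mset (xt, yt) S) y = n_label S y + of_bool (yt = y)"
  by (simp add: n_label_def)

lemma n_feat_label_add_mset [simp]: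
  "n_feat_label (add_mset (xt, yt) S) i a y
     = n_feat_label S i a y + of_bool (xt ! i = a \<and> yt = y)"
  by (simp add: n_feat_label_def)

lemma n_label_le_size: "n_label S y \<le> size S"
  unfolding n_label_def by (rule size_filter_mset_lesseq)

lemma n_label_pos: "r \<in># S \<Longrightarrow> 0 < n_label S (snd r)"
  unfolding n_label_def
  by (metis (mono_tags) count_filter_mset count_le_size not_gr0 not_in_iff le_zero_eq)

lemma Min_n_label_pos:
  assumes "T \<noteq> {#}"
  shows "0 < Min (n_label T ` snd ` set_mset T)"
  using assms n_label_pos by (subst Min_gr_iff) auto

lemma one_le_card_bound:
  assumes "1 \<le> m" "\<forall>i<m. finite (D i) \<and> card (D i) \<le> v" "x \<in> record_space m D"
  shows "1 \<le> v"
proof -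
  have "x ! 0 \<in> D 0"
    using assms(1,3) by (simp add: record_space_def)
  then show ?thesis
    using assms(1,2) card_gt_0_iff [of "D 0"] by fastforce
qed

lemma delta_training_stableI:
  assumes "1 < \<delta>"
    and nonneg: "\<And>S x y. 0 \<le> p S x y"
    and lower: "\<And>t x y. t \<in># T \<Longrightarrow> x \<in> Xs \<Longrightarrow> y \<in> Ys \<Longrightarrow>
      p (T - {#t#}) x y \<le> \<delta> * p T x y"
    and upper: "\<And>t x y. t \<in># T \<Longrightarrow> 0 < p (T - {#t#}) (fst t) (snd t) \<Longrightarrow>
      x \<in> Xs \<Longrightarrow> y \<in> Ys \<Longrightarrow>
      p T x y \<le> max 1 (p T (fst t) (snd t) / p (T - {#t#}) (fst t) (snd t)) * p (T - {#t#}) x y"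
  shows "delta_training_stable p \<delta> T Xs Ys"
  unfolding delta_training_stable_def Let_def
proof (intro conjI assms(1) ballI impI)
  fix t x y
  assume t: "t \<in># T" and pos: "0 < p (T - {#t#}) (fst t) (snd t) \<and> 0 < p T (fst t) (snd t)"
    and x: "x \<in> Xs" and y: "y \<in> Ys"
  let ?\<rho> = "p T (fst t) (snd t) / p (T - {#t#}) (fst t) (snd t)"
  let ?\<gamma> = "max \<delta> (max ?\<rho> (p (T - {#t#}) (fst t) (snd t) / p T (fst t) (snd t)))"
  have \<gamma>: "\<delta> \<le> ?\<gamma>" "max 1 ?\<rho> \<le> ?\<gamma>"
    using assms(1) by auto
  have "p (T - {#t#}) x y \<le> ?\<gamma> * p T x y"
    using lower[OF t x y] mult_right_mono[OF \<gamma>(1) nonneg] by (rule order_trans)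
  then show "inverse ?\<gamma> * p (T - {#t#}) x y \<le> p T x y"
    using \<gamma>(1) assms(1) by (simp add: field_simps)
  show "p T x y \<le> ?\<gamma> * p (T - {#t#}) x y"
    using upper[OF t _ x y] pos mult_right_mono[OF \<gamma>(2) nonneg] by (meson order_trans)
qed

lemma nb_laplace_nonneg: "0 \<le> nb_laplace v m S x y"
  unfolding nb_laplace_def by (intro mult_nonneg_nonneg prod_nonneg divide_nonneg_nonneg) auto

lemma nb_laplace_add_mset_other_label:
  assumes "y \<noteq> yt"
  shows "nb_laplace v m (add_mset (xt, yt) S) x y
           = real (size S) / (real (size S) + 1) * nb_laplace v m S x y"
  using assms by (cases "S = {#}") (simp_all add: nb_laplace_def n_label_def)

lemma nb_laplace_add_mset_same_label:
  "nb_laplace v m (add_mset (xt, y) S) x y =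
     (real (n_label S y) + 1) / (real (size S) + 1) *
     (\<Prod>i<m. (real (n_feat_label S i (x ! i) y) + of_bool (xt ! i = x ! i) + 1)
               / (real (n_label S y) + 1 + real v))"
  by (simp add: nb_laplace_def ac_simps)

lemma nb_laplace_same_label_cross_le:
  "nb_laplace v m (add_mset (xt, y) S) x y * nb_laplace v m S xt y
     \<le> nb_laplace v m (add_mset (xt, y) S) xt y * nb_laplace v m S x y"
proof -
  define n where "n = real (n_label S y)"
  define A where "A = (n + 1) / (real (size S) + 1)"
  define B where "B = n / real (size S)"
  define c where "c i = real (n_feat_label S i (x ! i) y)" for i
  define g where "g i = real (n_feat_label S i (xt ! i) y)" for i
  define e where "e i = (of_bool (xt ! i = x ! i) :: real)" for i
  have factor: "(c i + e i + 1) / (n + 1 + v) * ((g i + 1) / (n + v))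
      \<le> (g i + 1 + 1) / (n + 1 + v) * ((c i + 1) / (n + v))" for i
  proof -
    have "(c i + e i + 1) * (g i + 1) \<le> (g i + 1 + 1) * (c i + 1)"
    proof (cases "xt ! i = x ! i")
      case True
      then show ?thesis by (simp add: c_def g_def e_def)
    next
      case False
      then show ?thesis by (simp add: e_def mult_right_mono c_def)
    qed
    then have "(c i + e i + 1) * (g i + 1) / ((n + 1 + v) * (n + v))
        \<le> (g i + 1 + 1) * (c i + 1) / ((n + 1 + v) * (n + v))"
      by (rule divide_right_mono) (simp add: n_def)
    then show ?thesis by (simp only: times_divide_times_eq)
  qed
  have "(\<Prod>i<m. (c i + e i + 1) / (n + 1 + v)) * (\<Prod>i<m. (g i + 1) / (n + v))
      \<le> (\<Prod>i<m. (g i + 1 + 1) / (n + 1 + v)) * (\<Prod>i<m. (c i + 1) / (n + v))"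
    unfolding prod.distrib [symmetric]
    using factor by (intro prod_mono conjI) (simp_all add: c_def g_def e_def n_def)
  then have "A * B * ((\<Prod>i<m. (c i + e i + 1) / (n + 1 + v)) * (\<Prod>i<m. (g i + 1) / (n + v)))
      \<le> A * B * ((\<Prod>i<m. (g i + 1 + 1) / (n + 1 + v)) * (\<Prod>i<m. (c i + 1) / (n + v)))"
    by (rule mult_left_mono) (simp add: A_def B_def n_def)
  moreover have "nb_laplace v m (add_mset (xt, y) S) x y = A * (\<Prod>i<m. (c i + e i + 1) / (n + 1 + v))"
    "nb_laplace v m (add_mset (xt, y) S) xt y = A * (\<Prod>i<m. (g i + 1 + 1) / (n + 1 + v))"
    "nb_laplace v m S x y = B * (\<Prod>i<m. (c i + 1) / (n + v))"
    "nb_laplace v m S xt y = B * (\<Prod>i<m. (g i + 1) / (n + v))"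
    unfolding nb_laplace_add_mset_same_label
    by (simp_all add: nb_laplace_def A_def B_def n_def c_def g_def e_def)
  ultimately show ?thesis by (simp only: mult.assoc mult.left_commute)
qed

lemma nb_laplace_le_add_mset_same_label:
  assumes "1 \<le> m"
  shows "nb_laplace v m S x y
    \<le> ((real (n_label S y) + 1 + v) / (real (n_label S y) + v)) ^ (m - 1)
        * ((real (size S) + 1) / real (size S)) * nb_laplace v m (add_mset (xt, y) S) x y"
    (is "_ \<le> ?r ^ (m - 1) * ?N * _")
proof (cases "n_label S y = 0")
  case True
  then have "nb_laplace v m S x y = 0" by (simp add: nb_laplace_def)
  moreover have "0 \<le> ?r ^ (m - 1) * ?N * nb_laplace v m (add_mset (xt, y) S) x y"
    by (intro mult_nonneg_nonneg zero_le_power divide_nonneg_nonneg nb_laplace_nonneg) auto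
  ultimately show ?thesis by simp
next
  case False
  define n where "n = real (n_label S y)"
  define N where "N = real (size S)"
  define c where "c i = real (n_feat_label S i (x ! i) y)" for i
  define e where "e i = (of_bool (xt ! i = x ! i) :: real)" for i
  define P where "P = (\<Prod>i<m. (c i + e i + 1) / (n + 1 + v))"
  define r where "r = (n + 1 + v) / (n + v)"
  have n1: "1 \<le> n" and nN: "n \<le> N"
    using False n_label_le_size[of S y] by (simp_all add: n_def N_def)
  have nv: "0 < n + v" "0 < n + 1 + v" and N0: "0 < N" using n1 nN by simp_all
  have P0: "0 \<le> P"
    unfolding P_def c_def e_def using n1 by (intro prod_nonneg divide_nonneg_nonneg) auto
  have "(\<Prod>i<m. (c i + 1) / (n + v)) \<le> (\<Prod>i<m. r * ((c i + e i + 1) / (n + 1 + v)))"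
  proof (intro prod_mono conjI)
    fix i
    show "0 \<le> (c i + 1) / (n + v)" using n1 by (simp add: c_def)
    have "(c i + 1) / (n + v) \<le> (c i + e i + 1) / (n + v)"
      using n1 by (intro divide_right_mono) (auto simp: e_def)
    also have "\<dots> = r * ((c i + e i + 1) / (n + 1 + v))"
      using nv unfolding r_def by simp
    finally show "(c i + 1) / (n + v) \<le> r * ((c i + e i + 1) / (n + 1 + v))" .
  qed
  then have prod_le: "(\<Prod>i<m. (c i + 1) / (n + v)) \<le> r ^ m * P"
    by (simp only: P_def prod.distrib prod_constant card_lessThan)
  have nr: "n * r \<le> n + 1"
    using nv by (simp add: r_def field_simps)
  have "nb_laplace v m S x y = n / N * (\<Prod>i<m. (c i + 1) / (n + v))"
    by (simp add: nb_laplace_def n_def N_def c_def)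
  also have "\<dots> \<le> n / N * (r ^ m * P)"
    using prod_le n1 nN by (intro mult_left_mono) auto
  also have "\<dots> = r ^ (m - 1) * (n * r) / N * P"
    using assms by (simp add: power_eq_if)
  also have "\<dots> \<le> r ^ (m - 1) * (n + 1) / N * P"
    using nr n1 nN P0 by (intro mult_right_mono divide_right_mono mult_left_mono) (auto simp: r_def)
  also have "\<dots> = r ^ (m - 1) * ((N + 1) / N) * ((n + 1) / (N + 1) * P)"
    using N0 by (simp add: mult_ac)
  also have "\<dots> = ?r ^ (m - 1) * ?N * nb_laplace v m (add_mset (xt, y) S) x y"
    unfolding nb_laplace_add_mset_same_label by (simp add: r_def P_def n_def N_def c_def e_def)
  finally show ?thesis .
qed

lemma nb_laplace_add_mset_le:
  assumes pos: "0 < nb_laplace v m S xt yt"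
  shows "nb_laplace v m (add_mset (xt, yt) S) x y
    \<le> max 1 (nb_laplace v m (add_mset (xt, yt) S) xt yt / nb_laplace v m S xt yt)
        * nb_laplace v m S x y"
proof (cases "y = yt")
  case True
  then have "nb_laplace v m (add_mset (xt, yt) S) x y
      \<le> nb_laplace v m (add_mset (xt, yt) S) xt yt / nb_laplace v m S xt yt * nb_laplace v m S x y"
    using nb_laplace_same_label_cross_le[of v m xt yt S x] pos by (simp add: field_simps)
  also have "\<dots> \<le> max 1 (nb_laplace v m (add_mset (xt, yt) S) xt yt / nb_laplace v m S xt yt)
      * nb_laplace v m S x y"
    by (intro mult_right_mono nb_laplace_nonneg) simp
  finally show ?thesis .
next
  case False
  have "nb_laplace v m (add_mset (xt, yt) S) x y \<le> 1 * nb_laplace v m S x y"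
    unfolding nb_laplace_add_mset_other_label[OF False]
    by (intro mult_right_mono nb_laplace_nonneg) simp
  also have "\<dots> \<le> max 1 (nb_laplace v m (add_mset (xt, yt) S) xt yt / nb_laplace v m S xt yt)
      * nb_laplace v m S x y"
    by (intro mult_right_mono nb_laplace_nonneg) simp
  finally show ?thesis .
qed

lemma nb_laplace_le_add_mset:
  fixes k :: nat
  assumes "1 \<le> m" "1 \<le> v" "0 < k" "k \<le> n_label (add_mset (xt, yt) S) yt"
  shows "nb_laplace v m S x y
    \<le> ((real k + v) / k) ^ (m - 1) * ((real (size S) + 1) / real (size S))
        * nb_laplace v m (add_mset (xt, yt) S) x y"
    (is "_ \<le> ?q ^ (m - 1) * ?N * _")
proof (cases "y = yt")
  case True
  define n where "n = real (n_label S yt)"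
  have "(n + 1 + v) / (n + v) \<le> (n + 1 + v) / (n + 1)"
    using assms(2) by (intro divide_left_mono) (auto simp: n_def)
  also have "\<dots> \<le> ?q"
  proof -
    have "real k * v \<le> (n + 1) * v"
      using assms(4) by (intro mult_right_mono) (simp_all add: n_def)
    then show ?thesis using assms(3) by (simp add: n_def field_simps)
  qed
  finally have "((n + 1 + v) / (n + v)) ^ (m - 1) \<le> ?q ^ (m - 1)"
    by (rule power_mono) (simp add: n_def)
  then have "((n + 1 + v) / (n + v)) ^ (m - 1) * ?N * nb_laplace v m (add_mset (xt, yt) S) x y
      \<le> ?q ^ (m - 1) * ?N * nb_laplace v m (add_mset (xt, yt) S) x y"
    by (intro mult_right_mono nb_laplace_nonneg) auto
  with nb_laplace_le_add_mset_same_label[OF assms(1), of v S x y xt] True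
  show ?thesis by (simp add: n_def)
next
  case False
  have "nb_laplace v m S x y = ?N * nb_laplace v m (add_mset (xt, yt) S) x y"
  proof (cases "S = {#}")
    case True
    then show ?thesis by (simp add: nb_laplace_def n_label_def)
  next
    case False
    then show ?thesis by (simp add: nb_laplace_add_mset_other_label[OF \<open>y \<noteq> yt\<close>])
  qed
  also have "\<dots> \<le> ?q ^ (m - 1) * ?N * nb_laplace v m (add_mset (xt, yt) S) x y"
  proof (intro mult_right_mono nb_laplace_nonneg)
    have "1 \<le> ?q ^ (m - 1)"
      using assms(3) by (intro one_le_power) simp
    then show "?N \<le> ?q ^ (m - 1) * ?N"
      using mult_right_mono[of 1 "?q ^ (m - 1)" ?N] by simp
  qed
  finally show ?thesis .
qed

lemma nb_laplace_diff_singleton_le: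
  fixes k :: nat
  assumes t: "t \<in># T" and "1 \<le> m" "1 \<le> v" "0 < k" "k \<le> n_label T (snd t)"
  shows "nb_laplace v m (T - {#t#}) x y
    \<le> (real (k + v) / real k) ^ (m - 1) * (real (size T) / (real (size T) - 1))
        * nb_laplace v m T x y"
proof -
  have T: "add_mset (fst t, snd t) (T - {#t#}) = T"
    using t by simp
  have "size T = size (T - {#t#}) + 1"
    using t by (metis insert_DiffM size_add_mset Suc_eq_plus1)
  then have N: "real (size T) / (real (size T) - 1)
      = (real (size (T - {#t#})) + 1) / real (size (T - {#t#}))"
    by simp
  show ?thesis
    using nb_laplace_le_add_mset [OF assms(2-4), of "fst t" "snd t" "T - {#t#}" x y] assms(5)
    unfolding T N of_nat_add by simp
qed

lemma nb_laplace_le_diff_singleton: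
  assumes "t \<in># T" and "0 < nb_laplace v m (T - {#t#}) (fst t) (snd t)"
  shows "nb_laplace v m T x y \<le> max 1 (nb_laplace v m T (fst t) (snd t)
      / nb_laplace v m (T - {#t#}) (fst t) (snd t)) * nb_laplace v m (T - {#t#}) x y"
proof -
  have "add_mset (fst t, snd t) (T - {#t#}) = T"
    using assms(1) by simp
  then show ?thesis
    using nb_laplace_add_mset_le [OF assms(2), of x y] by simp
qed

theorem mainTheorem4:
  fixes T :: "('x, 'y) dataset" and m v :: nat and D :: "nat \<Rightarrow> 'x set" and Y :: "'y set"
  assumes "finite Y"
    and "1 \<le> m"
    and "2 \<le> size T"
    and "\<forall>i<m. finite (D i) \<and> card (D i) \<le> v"
    and "\<forall>r\<in>#T. fst r \<in> record_space m D \<and> snd r \<in> Y"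
  shows "delta_training_stable (nb_laplace v m)
           ((real (Min (n_label T ` snd ` set_mset T) + v)
               / real (Min (n_label T ` snd ` set_mset T))) ^ (m - 1)
             * (real (size T) / (real (size T) - 1)))
           T (record_space m D) Y"
proof -
  define k where "k = Min (n_label T ` snd ` set_mset T)"
  have T: "T \<noteq> {#}"
    using assms(3) by auto
  then obtain t0 where "t0 \<in># T"
    by blast
  then have v: "1 \<le> v"
    using one_le_card_bound [OF assms(2,4)] assms(5) by blast
  have k: "0 < k" and k_le: "\<And>t. t \<in># T \<Longrightarrow> k \<le> n_label T (snd t)"
    unfolding k_def using Min_n_label_pos [OF T] by auto
  show ?thesis
    unfolding k_def [symmetric]
  proof (rule delta_training_stableI [OF _ nb_laplace_nonneg])
    have "1 \<le> (real (k + v) / real k) ^ (m - 1)"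
      using k by (intro one_le_power) simp
    moreover have "1 < real (size T) / (real (size T) - 1)"
      using assms(3) by simp
    ultimately show "1 < (real (k + v) / real k) ^ (m - 1) * (real (size T) / (real (size T) - 1))"
      by (subst mult.commute) (rule less_1_mult')
  next
    fix t x y
    assume t: "t \<in># T"
    show "nb_laplace v m (T - {#t#}) x y \<le> (real (k + v) / real k) ^ (m - 1)
        * (real (size T) / (real (size T) - 1)) * nb_laplace v m T x y"
      by (rule nb_laplace_diff_singleton_le [OF t assms(2) v k k_le [OF t]])
    show "nb_laplace v m T x y \<le> max 1 (nb_laplace v m T (fst t) (snd t)
          / nb_laplace v m (T - {#t#}) (fst t) (snd t)) * nb_laplace v m (T - {#t#}) x y"
      if "0 < nb_laplace v m (T - {#t#}) (fst t) (snd t)"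
      using nb_laplace_le_diff_singleton [OF t that] .
  qed
qed

end
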